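(* There exists a regular $K_4$-saturated graph on $n$ vertices for every positive integer $n$ satisfying $n\equiv 6 \pmod 8$, for every positive integer $n$ satisfying $n\equiv 0\pmod 8$, and for every positive integer $n$ satisfying $n\equiv 0\pmod{17}$.
   Context: All graphs are finite and simple. A graph $G$ is $K_4$-saturated if it contains no copy of the complete graph $K_4$ but adding any edge between two non-adjacent vertices creates a copy of $K_4$. A graph is regular if all vertices have the same degree. *)

theory Defs
  imports Main
begin

definition simple_graph :: "'a set \<Rightarrow> ('a \<Rightarrow> 'a \<Rightarrow> bool) \<Rightarrow> bool" where
  "simple_graph V E \<longleftrightarrow> finite V \<and> (\<forall>u v. E u v \<longrightarrow> u \<in> V \<and> v \<in> V)
     \<and> (\<forall>u v. E u v \<longrightarrow> E v u) \<and> (\<forall>v. \<not> E v v)"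

definition degree :: "'a set \<Rightarrow> ('a \<Rightarrow> 'a \<Rightarrow> bool) \<Rightarrow> 'a \<Rightarrow> nat" where
  "degree V E v = card {u \<in> V. E v u}"

definition regular :: "'a set \<Rightarrow> ('a \<Rightarrow> 'a \<Rightarrow> bool) \<Rightarrow> bool" where
  "regular V E \<longleftrightarrow> (\<exists>d. \<forall>v\<in>V. degree V E v = d)"

definition has_K4 :: "'a set \<Rightarrow> ('a \<Rightarrow> 'a \<Rightarrow> bool) \<Rightarrow> bool" where
  "has_K4 V E \<longleftrightarrow> (\<exists>S. S \<subseteq> V \<and> card S = 4 \<and> (\<forall>u\<in>S. \<forall>v\<in>S. u \<noteq> v \<longrightarrow> E u v))"

definition add_edge :: "('a \<Rightarrow> 'a \<Rightarrow> bool) \<Rightarrow> 'a \<Rightarrow> 'a \<Rightarrow> ('a \<Rightarrow> 'a \<Rightarrow> bool)" where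
  "add_edge E x y = (\<lambda>u v. E u v \<or> (u = x \<and> v = y) \<or> (u = y \<and> v = x))"

definition K4_saturated :: "'a set \<Rightarrow> ('a \<Rightarrow> 'a \<Rightarrow> bool) \<Rightarrow> bool" where
  "K4_saturated V E \<longleftrightarrow> \<not> has_K4 V E \<and>
     (\<forall>x\<in>V. \<forall>y\<in>V. x \<noteq> y \<and> \<not> E x y \<longrightarrow> has_K4 V (add_edge E x y))"

end

theory Submission
  imports Defs
begin

(* For 8A - 2 \<le> n \<le> 10A - 3 take the circulant graph on Z_n whose connection set is
   {\<plusminus>A, ..., \<plusminus>(3A - 1)}.  Four vertices in cyclic order cut the cycle into four arcs;
   if they formed a K4, every arc and every union of two consecutive arcs would have
   length in the connection set, which forces n \<le> 8A - 3.  A non-edge can be rotated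
   to {0, d} with d \<le> n/2, so d < A or d \<ge> 3A, and then d + A, d + 2A, or A, 2A,
   or 2A - 1, 3A - 1 are two adjacent common neighbours of 0 and d.  Such an A exists
   for every n in the statement except n = 8, where the join of a 5-cycle with three
   independent vertices is regular and K4-saturated. *)

lemma has_K4_intro:
  assumes "\<forall>u v. E u v \<longrightarrow> E v u" "{a, b, c, d} \<subseteq> V" "distinct [a, b, c, d]"
    "E a b" "E a c" "E a d" "E b c" "E b d" "E c d"
  shows "has_K4 V E"
  unfolding has_K4_def using assms by (intro exI[of _ "{a, b, c, d}"]) auto

lemma has_K4_sortedE:
  fixes V :: "'a::linorder set"
  assumes "has_K4 V E"
  obtains a b c d where "a < b" "b < c" "c < d" "{a, b, c, d} \<subseteq> V"
    "E a b" "E a c" "E a d" "E b c" "E b d" "E c d"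
proof -
  obtain S where S: "S \<subseteq> V" "card S = 4" "\<forall>u\<in>S. \<forall>v\<in>S. u \<noteq> v \<longrightarrow> E u v"
    using assms unfolding has_K4_def by blast
  define l where "l = sorted_list_of_set S"
  have "finite S" using S(2) by (simp add: card_ge_0_finite)
  then have l: "length l = 4" "set l = S" "sorted_wrt (<) l"
    using S(2) by (simp_all add: l_def)
  then have less: "l ! i < l ! j" if "i < j" "j < 4" for i j
    using that by (simp add: sorted_wrt_nth_less)
  have mem: "l ! i \<in> S" if "i < 4" for i
    using that l by (metis nth_mem)
  have "E (l ! i) (l ! j)" if "i < j" "j < 4" for i j
    using S(3) less[OF that] mem[of i] mem[of j] that by auto
  with less mem S(1) show thesis
    by (intro that[of "l ! 0" "l ! 1" "l ! 2" "l ! 3"]) auto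
qed

lemma has_K4_image:
  assumes "has_K4 V E" "inj_on f V" "f ` V \<subseteq> W"
    and "\<And>u v. u \<in> V \<Longrightarrow> v \<in> V \<Longrightarrow> E u v \<Longrightarrow> E' (f u) (f v)"
  shows "has_K4 W E'"
proof -
  obtain S where S: "S \<subseteq> V" "card S = 4" "\<forall>u\<in>S. \<forall>v\<in>S. u \<noteq> v \<longrightarrow> E u v"
    using assms(1) unfolding has_K4_def by blast
  have "inj_on f S" using S(1) assms(2) by (rule inj_on_subset[rotated])
  then have "card (f ` S) = 4" using S(2) by (simp add: card_image)
  moreover have "f ` S \<subseteq> W" using S(1) assms(3) by blast
  moreover have "E' u v" if uv: "u \<in> f ` S" "v \<in> f ` S" "u \<noteq> v" for u v
  proof -
    obtain a b where ab: "a \<in> S" "b \<in> S" "u = f a" "v = f b"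
      using uv(1,2) by blast
    with uv(3) have "E a b" using S(3) by metis
    with ab S(1) show ?thesis using assms(4) by blast
  qed
  ultimately show ?thesis
    unfolding has_K4_def by (intro exI[of _ "f ` S"]) blast
qed

lemma add_edge_commute: "add_edge E x y = add_edge E y x"
  unfolding add_edge_def by auto

lemma add_edge_sym:
  "\<forall>u v. E u v \<longrightarrow> E v u \<Longrightarrow> \<forall>u v. add_edge E x y u v \<longrightarrow> add_edge E x y v u"
  unfolding add_edge_def by blast

lemma diff_mod_eq_iff:
  fixes n :: nat
  assumes "u < n" "v < n"
  shows "(v + n - u) mod n = t \<longleftrightarrow> t < n \<and> (u + t) mod n = v"
proof
  assume "(v + n - u) mod n = t"
  moreover have "(u + (v + n - u) mod n) mod n = v"
    using assms by (simp add: mod_add_right_eq)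
  ultimately show "t < n \<and> (u + t) mod n = v"
    using assms by auto
next
  assume t: "t < n \<and> (u + t) mod n = v"
  then have "v + n - u = (if u + t < n then t + n else t)"
    using assms by (auto simp: mod_if)
  with t show "(v + n - u) mod n = t"
    by auto
qed

lemma diff_mod_add_diff_mod:
  fixes n :: nat
  assumes "u < n" "v < n" "u \<noteq> v"
  shows "(v + n - u) mod n + (u + n - v) mod n = n"
  using assms by (cases "u < v") (auto simp: mod_if)

lemma inj_on_add_mod:
  fixes n :: nat
  assumes "x < n"
  shows "inj_on (\<lambda>u. (x + u) mod n) {0..<n}"
proof (rule inj_on_inverseI)
  fix u assume "u \<in> {0..<n}"
  then show "((x + u) mod n + n - x) mod n = u"
    using diff_mod_eq_iff[OF assms, of "(x + u) mod n" u] assms by simp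
qed

definition circulant :: "nat \<Rightarrow> nat set \<Rightarrow> nat \<Rightarrow> nat \<Rightarrow> bool" where
  "circulant n S u v \<longleftrightarrow> u < n \<and> v < n \<and> (v + n - u) mod n \<in> S"

lemma circulant_less_iff:
  assumes "u < v" "v < n"
  shows "circulant n S u v \<longleftrightarrow> v - u \<in> S"
proof -
  have "(v + n - u) mod n = v - u"
    using assms by (subst diff_mod_eq_iff) auto
  with assms show ?thesis unfolding circulant_def by simp
qed

lemma circulant_rotate:
  assumes "u < n" "v < n"
  shows "circulant n S ((x + u) mod n) ((x + v) mod n) \<longleftrightarrow> circulant n S u v"
proof -
  have "((x + u) mod n + (v + n - u) mod n) mod n = (x + v) mod n"
    using diff_mod_eq_iff[OF assms] by (metis add.assoc mod_add_left_eq mod_add_right_eq)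
  then have "((x + v) mod n + n - (x + u) mod n) mod n = (v + n - u) mod n"
    using assms by (subst diff_mod_eq_iff) auto
  then show ?thesis
    using assms unfolding circulant_def by auto
qed

lemma circulant_sym:
  assumes "\<And>t. t \<in> S \<Longrightarrow> t < n \<Longrightarrow> n - t \<in> S"
  shows "circulant n S u v \<longleftrightarrow> circulant n S v u"
proof -
  have "circulant n S u v \<longleftrightarrow> circulant n S v u" if "u < v" for u v
  proof (cases "v < n")
    case True
    have "(u + n - v) mod n = n - (v - u)"
      using that True by (subst diff_mod_eq_iff) auto
    then have "circulant n S v u \<longleftrightarrow> n - (v - u) \<in> S"
      using that True by (simp add: circulant_def)
    moreover have "circulant n S u v \<longleftrightarrow> v - u \<in> S"
      using that True by (rule circulant_less_iff)
    moreover have "n - (n - (v - u)) = v - u" "v - u < n" "n - (v - u) < n"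
      using that True by auto
    ultimately show ?thesis
      using assms[of "v - u"] assms[of "n - (v - u)"] by metis
  qed (simp add: circulant_def)
  then show ?thesis by (cases u v rule: linorder_cases) auto
qed

lemma simple_graph_circulant:
  assumes "0 \<notin> S" "\<And>t. t \<in> S \<Longrightarrow> t < n \<Longrightarrow> n - t \<in> S"
  shows "simple_graph {0..<n} (circulant n S)"
  using assms circulant_sym[OF assms(2)] unfolding simple_graph_def by (auto simp: circulant_def)

lemma degree_circulant:
  assumes "v < n"
  shows "degree {0..<n} (circulant n S) v = card (S \<inter> {..<n})"
proof -
  have "{u \<in> {0..<n}. circulant n S v u} = (\<lambda>t. (v + t) mod n) ` (S \<inter> {..<n})"
  proof (intro set_eqI iffI)
    fix u assume "u \<in> {u \<in> {0..<n}. circulant n S v u}"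
    then have "u < n" "(u + n - v) mod n \<in> S" by (simp_all add: circulant_def)
    moreover have "(u + n - v) mod n < n" "(v + (u + n - v) mod n) mod n = u"
      using diff_mod_eq_iff[OF assms \<open>u < n\<close>] by blast+
    ultimately show "u \<in> (\<lambda>t. (v + t) mod n) ` (S \<inter> {..<n})"
      by (intro image_eqI[of _ _ "(u + n - v) mod n"]) auto
  next
    fix u assume "u \<in> (\<lambda>t. (v + t) mod n) ` (S \<inter> {..<n})"
    then obtain t where t: "t \<in> S" "t < n" "u = (v + t) mod n" by blast
    then have "u < n" using assms by simp
    with t have "(u + n - v) mod n = t"
      using diff_mod_eq_iff[OF assms \<open>u < n\<close>] by blast
    with t \<open>u < n\<close> assms show "u \<in> {u \<in> {0..<n}. circulant n S v u}"
      by (simp add: circulant_def)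
  qed
  moreover have "inj_on (\<lambda>t. (v + t) mod n) (S \<inter> {..<n})"
    using inj_on_add_mod[OF assms] by (rule inj_on_subset) auto
  ultimately show ?thesis
    unfolding degree_def by (simp add: card_image)
qed

lemma regular_circulant: "regular {0..<n} (circulant n S)"
  unfolding regular_def by (auto simp: degree_circulant)

lemma K4_saturated_circulant:
  assumes sym: "\<And>t. t \<in> S \<Longrightarrow> t < n \<Longrightarrow> n - t \<in> S"
    and K4_free: "\<not> has_K4 {0..<n} (circulant n S)"
    and saturated_at_0: "\<And>d. 0 < d \<Longrightarrow> 2 * d \<le> n \<Longrightarrow> d \<notin> S \<Longrightarrow>
      has_K4 {0..<n} (add_edge (circulant n S) 0 d)"
  shows "K4_saturated {0..<n} (circulant n S)"
proof -
  have oriented: "has_K4 {0..<n} (add_edge (circulant n S) x y)"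
    if "x < n" "y < n" "x \<noteq> y" "\<not> circulant n S x y" "2 * ((y + n - x) mod n) \<le> n" for x y
  proof -
    define d where "d = (y + n - x) mod n"
    have d: "d < n" "(x + d) mod n = y"
      using diff_mod_eq_iff[OF that(1,2)] unfolding d_def by auto
    then have "0 < d" "d \<notin> S"
      using that by (auto simp: d_def circulant_def intro: gr0I)
    then have "has_K4 {0..<n} (add_edge (circulant n S) 0 d)"
      using saturated_at_0 that(5) unfolding d_def by blast
    then show ?thesis
    proof (rule has_K4_image)
      show "inj_on (\<lambda>u. (x + u) mod n) {0..<n}" using that(1) by (rule inj_on_add_mod)
      show "(\<lambda>u. (x + u) mod n) ` {0..<n} \<subseteq> {0..<n}" using that(1) by auto
      fix u v assume "u \<in> {0..<n}" "v \<in> {0..<n}" "add_edge (circulant n S) 0 d u v"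
      then show "add_edge (circulant n S) x y ((x + u) mod n) ((x + v) mod n)"
        using circulant_rotate[of u n v S x] d that(1) by (auto simp: add_edge_def)
    qed
  qed
  show ?thesis
    unfolding K4_saturated_def
  proof (intro conjI K4_free ballI impI)
    fix x y assume xy: "x \<in> {0..<n}" "y \<in> {0..<n}" "x \<noteq> y \<and> \<not> circulant n S x y"
    then have "2 * ((y + n - x) mod n) \<le> n \<or> 2 * ((x + n - y) mod n) \<le> n"
      using diff_mod_add_diff_mod[of x n y] by auto
    with xy show "has_K4 {0..<n} (add_edge (circulant n S) x y)"
      using oriented[of x y] oriented[of y x] circulant_sym[OF sym, of x y]
      by (auto simp: add_edge_commute)
  qed
qed

(* The connection set {\<plusminus>A, ..., \<plusminus>(3A - 1)} modulo n. *)
definition band :: "nat \<Rightarrow> nat \<Rightarrow> nat set" where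
  "band n A = {t. A \<le> t \<and> t < 3 * A} \<union> {t. n < t + 3 * A \<and> t + A \<le> n}"

lemma band_sym: "t \<in> band n A \<Longrightarrow> t < n \<Longrightarrow> n - t \<in> band n A"
  unfolding band_def by auto

lemma zero_notin_band: "0 < A \<Longrightarrow> 3 * A \<le> n \<Longrightarrow> 0 \<notin> band n A"
  unfolding band_def by auto

lemma circulant_band_K4_free:
  assumes "0 < A" "8 * A \<le> n + 2"
  shows "\<not> has_K4 {0..<n} (circulant n (band n A))"
proof
  assume "has_K4 {0..<n} (circulant n (band n A))"
  then obtain a b c d where "a < b" "b < c" "c < d" "d < n"
    and "b - a \<in> band n A" "c - a \<in> band n A" "d - a \<in> band n A"
      "c - b \<in> band n A" "d - b \<in> band n A" "d - c \<in> band n A"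
    by (elim has_K4_sortedE) (auto simp: circulant_less_iff)
  moreover obtain p q r where "b = a + p" "c = b + q" "d = c + r"
    using \<open>a < b\<close> \<open>b < c\<close> \<open>c < d\<close> by (metis less_imp_add_positive)
  ultimately have "p + q + r < n" "p \<in> band n A" "q \<in> band n A" "r \<in> band n A"
    "p + q \<in> band n A" "q + r \<in> band n A" "p + q + r \<in> band n A"
    by (simp_all add: add.assoc)
  then show False
    using assms unfolding band_def by (elim UnE CollectE conjE; linarith)
qed

lemma circulant_band_saturated_at_0:
  assumes "0 < A" "8 * A \<le> n + 2" "n + 3 \<le> 10 * A"
    and "0 < d" "2 * d \<le> n" "d \<notin> band n A"
  shows "has_K4 {0..<n} (add_edge (circulant n (band n A)) 0 d)"
proof -
  let ?E = "add_edge (circulant n (band n A)) 0 d"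
  have sym: "\<forall>u v. ?E u v \<longrightarrow> ?E v u"
    using circulant_sym[OF band_sym] by (intro add_edge_sym) blast
  have edge: "?E u v" if "u < v" "v < n" "A \<le> v - u" "v - u < 3 * A" for u v
    using that by (auto simp: add_edge_def circulant_less_iff band_def)
  have "?E 0 d" by (simp add: add_edge_def)
  consider "d < A" | "3 * A \<le> d" "d < 4 * A" | "4 * A \<le> d"
    using assms(5,6) unfolding band_def by fastforce
  then show ?thesis
  proof cases
    case 1
    then show ?thesis
      using assms \<open>?E 0 d\<close> edge[of 0 "d + A"] edge[of 0 "d + 2 * A"] edge[of d "d + A"]
        edge[of d "d + 2 * A"] edge[of "d + A" "d + 2 * A"]
      by (intro has_K4_intro[OF sym, of 0 d "d + A" "d + 2 * A"]) auto
  next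
    case 2
    then show ?thesis
      using assms \<open>?E 0 d\<close> edge[of 0 A] edge[of 0 "2 * A"] edge[of A "2 * A"]
        edge[of A d] edge[of "2 * A" d]
      by (intro has_K4_intro[OF sym, of 0 A "2 * A" d]) auto
  next
    case 3
    then show ?thesis
      using assms \<open>?E 0 d\<close> edge[of 0 "2 * A - 1"] edge[of 0 "3 * A - 1"]
        edge[of "2 * A - 1" "3 * A - 1"] edge[of "2 * A - 1" d] edge[of "3 * A - 1" d]
      by (intro has_K4_intro[OF sym, of 0 "2 * A - 1" "3 * A - 1" d]) auto
  qed
qed

lemma circulant_band_regular_K4_saturated:
  assumes "0 < A" "8 * A \<le> n + 2" "n + 3 \<le> 10 * A"
  shows "simple_graph {0..<n} (circulant n (band n A)) \<and> regular {0..<n} (circulant n (band n A))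
    \<and> K4_saturated {0..<n} (circulant n (band n A))"
  using assms
  by (intro conjI simple_graph_circulant zero_notin_band band_sym regular_circulant
      K4_saturated_circulant circulant_band_K4_free circulant_band_saturated_at_0) auto

definition C5_join_3 :: "nat \<Rightarrow> nat \<Rightarrow> bool" where
  "C5_join_3 u v \<longleftrightarrow> u < 8 \<and> v < 8 \<and>
     (u < 3 \<and> 3 \<le> v \<or> 3 \<le> u \<and> v < 3 \<or>
      3 \<le> u \<and> 3 \<le> v \<and> (u = v + 1 \<or> v = u + 1 \<or> (u, v) \<in> {(3, 7), (7, 3)}))"

lemma C5_join_3_sym: "C5_join_3 u v \<longleftrightarrow> C5_join_3 v u"
  unfolding C5_join_3_def by auto

lemma simple_graph_C5_join_3: "simple_graph {0..<8} C5_join_3"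
  unfolding simple_graph_def using C5_join_3_sym by (auto simp: C5_join_3_def)

lemma degree_C5_join_3:
  assumes "v < 8"
  shows "degree {0..<8} C5_join_3 v = 5"
proof -
  from assms consider "v = 0" | "v = 1" | "v = 2" | "v = 3" | "v = 4" | "v = 5" | "v = 6" | "v = 7"
    by linarith
  moreover have "{u \<in> {0..<8}. C5_join_3 v u} = set (filter (C5_join_3 v) [0..<8])"
    by auto
  ultimately show ?thesis
    unfolding degree_def by cases (simp_all add: upt_rec C5_join_3_def)
qed

lemma C5_join_3_K4_free: "\<not> has_K4 {0..<8} C5_join_3"
proof
  assume "has_K4 {0..<8} C5_join_3"
  then obtain a b c d where "a < b" "b < c" "c < d" "{a, b, c, d} \<subseteq> {0..<8}"
    "C5_join_3 a b" "C5_join_3 a c" "C5_join_3 a d" "C5_join_3 b c" "C5_join_3 b d" "C5_join_3 c d"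
    by (elim has_K4_sortedE) auto
  then have "3 \<le> b"
    unfolding C5_join_3_def by linarith
  with \<open>b < c\<close> \<open>c < d\<close> \<open>C5_join_3 b c\<close> \<open>C5_join_3 c d\<close> \<open>C5_join_3 b d\<close>
  show False
    unfolding C5_join_3_def by auto
qed

lemma C5_join_3_saturated:
  assumes "x < 8" "y < 8" "x \<noteq> y" "\<not> C5_join_3 x y"
  shows "has_K4 {0..<8} (add_edge C5_join_3 x y)"
proof -
  let ?E = "add_edge C5_join_3 x y"
  have sym: "\<forall>u v. ?E u v \<longrightarrow> ?E v u"
    using C5_join_3_sym by (intro add_edge_sym) blast
  have edge: "?E u v" if "C5_join_3 u v" for u v
    using that by (simp add: add_edge_def)
  have "?E x y" by (simp add: add_edge_def)
  have irrefl: "\<not> C5_join_3 u u" for u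
    by (simp add: C5_join_3_def)
  consider "x < 3" "y < 3" | "3 \<le> x" "3 \<le> y"
    using assms unfolding C5_join_3_def by linarith
  then show ?thesis
  proof cases
    case 1
    then have "C5_join_3 x 3" "C5_join_3 x 4" "C5_join_3 y 3" "C5_join_3 y 4" "C5_join_3 3 4"
      by (simp_all add: C5_join_3_def)
    with 1 assms(3) \<open>?E x y\<close> show ?thesis
      by (intro has_K4_intro[OF sym, of x y 3 4]) (simp_all add: edge)
  next
    case 2
    with assms(1,2) have "x \<in> {3, 4, 5, 6, 7}" "y \<in> {3, 4, 5, 6, 7}"
      by auto
    with assms(3,4) have "\<exists>c\<in>{3, 4, 5, 6, 7}. C5_join_3 x c \<and> C5_join_3 y c"
      by (elim insertE emptyE) (simp_all add: C5_join_3_def)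
    then obtain c where "c \<in> {3, 4, 5, 6, 7}" "C5_join_3 x c" "C5_join_3 y c"
      by blast
    then have c: "3 \<le> c" "c < 8" "C5_join_3 x c" "C5_join_3 y c"
      by auto
    moreover from c 2 assms(1,2) have "C5_join_3 x 0" "C5_join_3 y 0" "C5_join_3 c 0"
      by (simp_all add: C5_join_3_def)
    moreover from c irrefl have "c \<noteq> x" "c \<noteq> y"
      by auto
    ultimately show ?thesis
      using 2 assms(1-3) \<open>?E x y\<close>
      by (intro has_K4_intro[OF sym, of x y c 0]) (simp_all add: edge C5_join_3_def)
  qed
qed

lemma C5_join_3_regular_K4_saturated:
  "simple_graph {0..<8} C5_join_3 \<and> regular {0..<8} C5_join_3 \<and> K4_saturated {0..<8} C5_join_3"
proof (intro conjI)
  show "regular {0..<8} C5_join_3"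
    unfolding regular_def using degree_C5_join_3 by auto
  show "K4_saturated {0..<8} C5_join_3"
    unfolding K4_saturated_def using C5_join_3_K4_free C5_join_3_saturated by auto
qed (rule simple_graph_C5_join_3)

lemma exists_band_width:
  fixes n :: nat
  assumes "n > 0" "n \<noteq> 8" "n mod 8 = 6 \<or> n mod 8 = 0 \<or> n mod 17 = 0"
  shows "\<exists>A. 0 < A \<and> 8 * A \<le> n + 2 \<and> n + 3 \<le> 10 * A"
  using assms(3)
proof (elim disjE)
  define q where "q = n div 8"
  assume "n mod 8 = 6"
  then have "n = 8 * q + 6"
    using div_mult_mod_eq[of n 8] unfolding q_def by linarith
  then show ?thesis by (intro exI[of _ "q + 1"]) simp
next
  define q where "q = n div 8"
  assume "n mod 8 = 0"
  then have "n = 8 * q"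
    using div_mult_mod_eq[of n 8] unfolding q_def by linarith
  moreover from this assms(1,2) have "q \<ge> 2" by auto
  ultimately show ?thesis by (intro exI[of _ q]) simp
next
  define q where "q = n div 17"
  assume "n mod 17 = 0"
  then have "n = 17 * q"
    using div_mult_mod_eq[of n 17] unfolding q_def by linarith
  moreover from this assms(1) have "q \<ge> 1" by linarith
  ultimately show ?thesis by (intro exI[of _ "2 * q"]) simp
qed

theorem proposition4p1:
  fixes n :: nat
  assumes "n > 0"
    and "n mod 8 = 6 \<or> n mod 8 = 0 \<or> n mod 17 = 0"
  shows "\<exists>E :: nat \<Rightarrow> nat \<Rightarrow> bool. simple_graph {0..<n} E \<and> regular {0..<n} E \<and> K4_saturated {0..<n} E"
proof (cases "n = 8")
  case True
  show ?thesis
    unfolding True using C5_join_3_regular_K4_saturated by (rule exI[of _ C5_join_3])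
next
  case False
  then obtain A where "0 < A" "8 * A \<le> n + 2" "n + 3 \<le> 10 * A"
    using exists_band_width[OF assms(1) False assms(2)] by blast
  then show ?thesis
    using circulant_band_regular_K4_saturated[of A n] by blast
qed

end
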